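(* Let $\Delta_1,\Delta_2,\Delta_3$ be simplicial complexes on $[n]$. For nonempty $A,B\subseteq[n]$ set $\Delta_{A,B}=(A*\Delta_1)\cup(B*\Delta_2)\cup((A\cup B)*\Delta_3)$. If $A,B,A',B'\subseteq[n]$ are nonempty with $A\cap B=\emptyset$, $A'\cap B'=\emptyset$, and neither $A\cup B$ nor $A'\cup B'$ meets the vertex set of $\Delta_1\cup\Delta_2\cup\Delta_3$, then $$\tilde H_i(\Delta_{A,B};\mathbb{K})\cong\tilde H_i(\Delta_{A',B'};\mathbb{K})\quad\text{for all } i>0.$$
   Context: A simplicial complex on $[n]$ is a finite family of subsets of $[n]$ closed under taking subsets (singletons need not belong to it); its vertex set is the union of its faces. For a nonempty $A\subseteq[n]$ and a simplicial complex $\Delta$ on $[n]$, the cone $A*\Delta$ is the simplicial complex whose facets are the sets $A\cup F$ with $F$ a facet of $\Delta$. $\tilde H_i(\,\cdot\,;\mathbb{K})$ denotes reduced simplicial homology with coefficients in the field $\mathbb{K}$. *)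

theory Defs
  imports Main
begin

definition simplicial_complex :: "nat \<Rightarrow> nat set set \<Rightarrow> bool" where
  "simplicial_complex n \<Delta> \<longleftrightarrow> \<Delta> \<subseteq> Pow {1..n} \<and> (\<forall>F\<in>\<Delta>. \<forall>G. G \<subseteq> F \<longrightarrow> G \<in> \<Delta>)"

definition vertex_set :: "nat set set \<Rightarrow> nat set" where
  "vertex_set \<Delta> = \<Union>\<Delta>"

definition cone :: "nat set \<Rightarrow> nat set set \<Rightarrow> nat set set" where
  "cone A \<Delta> = {G. \<exists>F\<in>\<Delta>. G \<subseteq> A \<union> F}"

definition Delta_AB :: "nat set set \<Rightarrow> nat set set \<Rightarrow> nat set set \<Rightarrow> nat set \<Rightarrow> nat set \<Rightarrow> nat set set" where
  "Delta_AB D1 D2 D3 A B = cone A D1 \<union> cone B D2 \<union> cone (A \<union> B) D3"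

text \<open>Simplicial chains with coefficients in a field: a k-chain is a coefficient function on the
  faces with k+1 elements (faces ordered increasingly; the empty face gives the augmentation
  in degree -1, so homology is reduced).\<close>
definition chains :: "nat set set \<Rightarrow> nat \<Rightarrow> (nat set \<Rightarrow> 'k::field) set" where
  "chains \<Delta> k = {c. \<forall>F. c F \<noteq> 0 \<longrightarrow> F \<in> \<Delta> \<and> card F = Suc k}"

definition bd :: "nat set set \<Rightarrow> (nat set \<Rightarrow> 'k::field) \<Rightarrow> nat set \<Rightarrow> 'k" where
  "bd \<Delta> c G = (if G \<in> \<Delta> then
      (\<Sum>v\<in>\<Union>\<Delta> - G. if insert v G \<in> \<Delta>
         then (-1) ^ card {u\<in>G. u < v} * c (insert v G) else 0)
    else 0)"

definition cycles :: "nat set set \<Rightarrow> nat \<Rightarrow> (nat set \<Rightarrow> 'k::field) set" where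
  "cycles \<Delta> k = {c \<in> chains \<Delta> k. bd \<Delta> c = (\<lambda>_. 0)}"

definition boundaries :: "nat set set \<Rightarrow> nat \<Rightarrow> (nat set \<Rightarrow> 'k::field) set" where
  "boundaries \<Delta> k = bd \<Delta> ` chains \<Delta> (Suc k)"

text \<open>Reduced homology in degree k of two complexes are isomorphic as K-vector spaces:
  there is a K-linear map on cycles inducing a bijection Z/B \<rightarrow> Z'/B'.\<close>
definition reduced_homology_iso ::
  "'k::field itself \<Rightarrow> nat set set \<Rightarrow> nat set set \<Rightarrow> nat \<Rightarrow> bool" where
  "reduced_homology_iso K \<Delta> \<Delta>' k \<longleftrightarrow>
    (\<exists>f :: (nat set \<Rightarrow> 'k) \<Rightarrow> (nat set \<Rightarrow> 'k).
       (\<forall>z\<in>cycles \<Delta> k. f z \<in> cycles \<Delta>' k) \<and>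
       (\<forall>a b x y. x \<in> cycles \<Delta> k \<longrightarrow> y \<in> cycles \<Delta> k \<longrightarrow>
          f (\<lambda>F. a * x F + b * y F) = (\<lambda>F. a * f x F + b * f y F)) \<and>
       (\<forall>z'\<in>cycles \<Delta>' k. \<exists>z\<in>cycles \<Delta> k. (\<lambda>F. z' F - f z F) \<in> boundaries \<Delta>' k) \<and>
       (\<forall>z\<in>cycles \<Delta> k. f z \<in> boundaries \<Delta>' k \<longleftrightarrow> z \<in> boundaries \<Delta> k))"

end

theory Submission
  imports Defs
begin

(* Deleting a vertex a that is dominated by a vertex a0 (every face through a extends by a0)
   does not change reduced homology: with E the coning of chains by a0, the map
   x \<mapsto> x - \<partial>(E x) retracts the cycles of the complex onto cycles of the deletion and
   inverts the inclusion on homology. In Delta_AB a fresh vertex added to A is dominated by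
   any old apex in A, so A, and symmetrically B, can be grown and shrunk one vertex at a time.
   This connects both Delta_{A,B} and Delta_{A',B'} to Delta_{{c},{d}} for two fresh
   vertices c and d. *)

lemma simplicial_complex_vertices_subset:
  "simplicial_complex m \<Delta> \<Longrightarrow> \<Union>\<Delta> \<subseteq> {1..m}"
  unfolding simplicial_complex_def by blast

lemma simplicial_complex_finite_vertices:
  "simplicial_complex m \<Delta> \<Longrightarrow> finite (\<Union>\<Delta>)"
  using simplicial_complex_vertices_subset finite_subset finite_atLeastAtMost by metis

lemma simplicial_complex_finite_face:
  "simplicial_complex m \<Delta> \<Longrightarrow> F \<in> \<Delta> \<Longrightarrow> finite F"
  by (meson Union_upper finite_subset simplicial_complex_finite_vertices)

lemma simplicial_complex_subset_face:
  "simplicial_complex m \<Delta> \<Longrightarrow> F \<in> \<Delta> \<Longrightarrow> G \<subseteq> F \<Longrightarrow> G \<in> \<Delta>"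
  unfolding simplicial_complex_def by blast

lemma simplicial_complex_mono:
  assumes "simplicial_complex m \<Delta>" "m \<le> m'"
  shows "simplicial_complex m' \<Delta>"
  using assms order_trans unfolding simplicial_complex_def by fastforce

lemma simplicial_complex_Un:
  "simplicial_complex m \<Delta> \<Longrightarrow> simplicial_complex m \<Delta>' \<Longrightarrow> simplicial_complex m (\<Delta> \<union> \<Delta>')"
  unfolding simplicial_complex_def by auto

definition incidence_sign :: "nat set \<Rightarrow> nat \<Rightarrow> 'k::field" where
  "incidence_sign G v = (-1) ^ card {u\<in>G. u < v}"

lemma bd_altdef:
  "bd \<Delta> c G = (if G \<in> \<Delta> then
     (\<Sum>v\<in>\<Union>\<Delta> - G. if insert v G \<in> \<Delta> then incidence_sign G v * c (insert v G) else 0)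
   else 0)"
  unfolding bd_def incidence_sign_def ..

lemma incidence_sign_square: "incidence_sign G v * incidence_sign G v = (1::'k::field)"
  unfolding incidence_sign_def power_add[symmetric] by simp

lemma incidence_sign_nonzero: "incidence_sign G v \<noteq> (0::'k::field)"
  unfolding incidence_sign_def by simp

lemma incidence_sign_insert:
  assumes "v \<notin> G"
  shows "incidence_sign (insert v G) w = (if v < w then -1 else 1) * (incidence_sign G w :: 'k::field)"
proof (cases "v < w")
  case True
  then have "{u\<in>insert v G. u < w} = insert v {u\<in>G. u < w}" by auto
  moreover have "finite {u\<in>G. u < w}" by simp
  ultimately have "card {u\<in>insert v G. u < w} = Suc (card {u\<in>G. u < w})"
    using assms by simp
  then show ?thesis using True unfolding incidence_sign_def by simp
next
  case False
  then have "{u\<in>insert v G. u < w} = {u\<in>G. u < w}" by auto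
  then show ?thesis using False unfolding incidence_sign_def by simp
qed

lemma incidence_sign_swap:
  assumes "v \<notin> G" "w \<notin> G" "v \<noteq> w"
  shows "incidence_sign G w * incidence_sign (insert w G) v
       = - (incidence_sign G v * incidence_sign (insert v G) w :: 'k::field)"
  using assms incidence_sign_insert[of v G w, where 'k='k] incidence_sign_insert[of w G v, where 'k='k]
  by (cases "v < w") (simp_all add: algebra_simps)

text \<open>Splitting at the diagonal avoids concluding S = 0 from S = -S, which fails in
  characteristic 2.\<close>
lemma sum_off_diagonal_antisymmetric:
  fixes T :: "'a::linorder \<Rightarrow> 'a \<Rightarrow> 'b::ab_group_add"
  assumes "finite U" and antisym: "\<And>v w. v \<in> U \<Longrightarrow> w \<in> U \<Longrightarrow> v \<noteq> w \<Longrightarrow> T w v = - T v w"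
  shows "(\<Sum>v\<in>U. \<Sum>w\<in>U - {v}. T v w) = 0"
proof -
  define L where "L v w = (if v < w then T v w else 0)" for v w
  have "(\<Sum>w\<in>U - {v}. T v w) = (\<Sum>w\<in>U. L v w - L w v)" if "v \<in> U" for v
  proof -
    have "(\<Sum>w\<in>U - {v}. T v w) = (\<Sum>w\<in>U - {v}. L v w - L w v)"
      using antisym[OF that] unfolding L_def
      by (intro sum.cong) (auto simp: not_less_iff_gr_or_eq)
    also have "\<dots> = (\<Sum>w\<in>U. L v w - L w v)"
      using assms(1) that by (simp add: sum.remove)
    finally show ?thesis .
  qed
  then have "(\<Sum>v\<in>U. \<Sum>w\<in>U - {v}. T v w) = (\<Sum>v\<in>U. \<Sum>w\<in>U. L v w - L w v)"
    by simp
  also have "\<dots> = 0"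
    by (simp add: sum_subtractf sum.swap[of L U U])
  finally show ?thesis .
qed

lemma bd_bd:
  assumes "simplicial_complex m \<Delta>"
  shows "bd \<Delta> (bd \<Delta> c) = (\<lambda>_. 0 :: 'k::field)"
proof
  fix G
  show "bd \<Delta> (bd \<Delta> c) G = 0"
  proof (cases "G \<in> \<Delta>")
    case True
    define U where "U = \<Union>\<Delta> - G"
    define T where "T v w = (if insert w (insert v G) \<in> \<Delta>
       then incidence_sign G v * incidence_sign (insert v G) w * c (insert w (insert v G))
       else (0::'k))" for v w
    have "(if insert v G \<in> \<Delta> then incidence_sign G v * bd \<Delta> c (insert v G) else 0)
          = (\<Sum>w\<in>U - {v}. T v w)" if "v \<in> U" for v
    proof (cases "insert v G \<in> \<Delta>")
      case True
      have "\<Union>\<Delta> - insert v G = U - {v}" unfolding U_def by auto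
      then show ?thesis using True unfolding bd_altdef[of \<Delta> c "insert v G"] T_def
        by (simp add: sum_distrib_left mult.assoc) (intro sum.cong; simp)
    next
      case False
      then have "T v w = 0" for w
        using assms unfolding T_def by (meson simplicial_complex_subset_face subset_insertI)
      then show ?thesis using False by simp
    qed
    then have "bd \<Delta> (bd \<Delta> c) G = (\<Sum>v\<in>U. \<Sum>w\<in>U - {v}. T v w)"
      using True unfolding bd_altdef[of \<Delta> "bd \<Delta> c" G] U_def[symmetric] by simp
    also have "\<dots> = 0"
    proof (rule sum_off_diagonal_antisymmetric)
      show "finite U" unfolding U_def using simplicial_complex_finite_vertices[OF assms] by simp
      show "T w v = - T v w" if "v \<in> U" "w \<in> U" "v \<noteq> w" for v w
        using that incidence_sign_swap[of v G w, where 'k='k] unfolding U_def T_def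
        by (simp add: insert_commute)
    qed
    finally show ?thesis .
  qed (simp add: bd_def)
qed

lemma bd_lincomb:
  "bd \<Delta> (\<lambda>F. a * x F + b * y F) = (\<lambda>G. a * bd \<Delta> x G + b * bd \<Delta> (y :: nat set \<Rightarrow> 'k::field) G)"
proof
  fix G
  have "(\<Sum>v\<in>\<Union>\<Delta> - G. if insert v G \<in> \<Delta>
          then incidence_sign G v * (a * x (insert v G) + b * y (insert v G)) else 0)
     = (\<Sum>v\<in>\<Union>\<Delta> - G. a * (if insert v G \<in> \<Delta> then incidence_sign G v * x (insert v G) else 0)
          + b * (if insert v G \<in> \<Delta> then incidence_sign G v * y (insert v G) else 0))"
    by (intro sum.cong) (auto simp: algebra_simps)
  then show "bd \<Delta> (\<lambda>F. a * x F + b * y F) G = a * bd \<Delta> x G + b * bd \<Delta> y G"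
    unfolding bd_altdef by (simp add: sum.distrib sum_distrib_left)
qed

lemma bd_add: "bd \<Delta> (\<lambda>F. x F + y F) = (\<lambda>G. bd \<Delta> x G + bd \<Delta> (y :: nat set \<Rightarrow> 'k::field) G)"
  using bd_lincomb[of \<Delta> 1 x 1 y] by simp

lemma bd_diff: "bd \<Delta> (\<lambda>F. x F - y F) = (\<lambda>G. bd \<Delta> x G - bd \<Delta> (y :: nat set \<Rightarrow> 'k::field) G)"
  using bd_lincomb[of \<Delta> 1 x "-1" y] by simp

lemma bd_zero: "bd \<Delta> (\<lambda>_. 0) = (\<lambda>_. 0 :: 'k::field)"
  using bd_lincomb[of \<Delta> 0 "\<lambda>_. 0 :: 'k" 0 "\<lambda>_. 0"] by simp

lemma bd_single_coface:
  assumes "simplicial_complex m \<Delta>" "insert v H \<in> \<Delta>" "v \<notin> H"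
    and "\<And>w. w \<notin> H \<Longrightarrow> w \<noteq> v \<Longrightarrow> c (insert w H) = 0"
  shows "bd \<Delta> c H = incidence_sign H v * (c (insert v H) :: 'k::field)"
proof -
  define h where "h w = (if insert w H \<in> \<Delta> then incidence_sign H w * c (insert w H) else 0)" for w
  have v: "v \<in> \<Union>\<Delta> - H" using assms(2,3) by auto
  have "H \<in> \<Delta>" using simplicial_complex_subset_face[OF assms(1,2)] by blast
  then have "bd \<Delta> c H = (\<Sum>w\<in>\<Union>\<Delta> - H. h w)"
    unfolding bd_altdef h_def by simp
  also have "\<dots> = h v + (\<Sum>w\<in>(\<Union>\<Delta> - H) - {v}. h w)"
    using simplicial_complex_finite_vertices[OF assms(1)] v by (simp add: sum.remove)
  also have "(\<Sum>w\<in>(\<Union>\<Delta> - H) - {v}. h w) = 0"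
    using assms(4) unfolding h_def by (intro sum.neutral) auto
  finally show ?thesis using assms(2) unfolding h_def by simp
qed

lemma chains_lincomb:
  "x \<in> chains \<Delta> k \<Longrightarrow> y \<in> chains \<Delta> k \<Longrightarrow> (\<lambda>F. a * x F + b * y F) \<in> chains \<Delta> k"
  unfolding chains_def by (auto simp del: mult_eq_0_iff) (metis add.right_neutral mult_zero_right)+

lemma chains_add: "x \<in> chains \<Delta> k \<Longrightarrow> y \<in> chains \<Delta> k \<Longrightarrow> (\<lambda>F. x F + y F) \<in> chains \<Delta> k"
  using chains_lincomb[of x \<Delta> k y 1 1] by simp

lemma chains_diff: "x \<in> chains \<Delta> k \<Longrightarrow> y \<in> chains \<Delta> k \<Longrightarrow> (\<lambda>F. x F - y F) \<in> chains \<Delta> k"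
  using chains_lincomb[of x \<Delta> k y 1 "-1"] by simp

lemma zero_in_chains: "(\<lambda>_. 0) \<in> chains \<Delta> k"
  unfolding chains_def by simp

lemma bd_in_chains:
  assumes "simplicial_complex m \<Delta>" "c \<in> chains \<Delta> (Suc k)"
  shows "bd \<Delta> c \<in> chains \<Delta> k"
  unfolding chains_def
proof (intro CollectI allI impI)
  fix G assume nz: "bd \<Delta> c G \<noteq> 0"
  then have G: "G \<in> \<Delta>" unfolding bd_def by (auto split: if_splits)
  with nz have "(\<Sum>v\<in>\<Union>\<Delta> - G. if insert v G \<in> \<Delta> then incidence_sign G v * c (insert v G) else 0) \<noteq> 0"
    unfolding bd_altdef by simp
  then obtain v where "v \<in> \<Union>\<Delta> - G"
    "(if insert v G \<in> \<Delta> then incidence_sign G v * c (insert v G) else 0) \<noteq> 0"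
    by (rule sum.not_neutral_contains_not_neutral)
  then have v: "v \<notin> G" "c (insert v G) \<noteq> 0" by (auto split: if_splits)
  then have "card (insert v G) = Suc (Suc k)" using assms(2) unfolding chains_def by auto
  moreover have "finite G" using simplicial_complex_finite_face[OF assms(1) G] .
  ultimately show "G \<in> \<Delta> \<and> card G = Suc k" using G v(1) by auto
qed

lemma bd_in_boundaries: "c \<in> chains \<Delta> (Suc k) \<Longrightarrow> bd \<Delta> c \<in> boundaries \<Delta> k"
  unfolding boundaries_def by (rule imageI)

lemma zero_in_boundaries: "(\<lambda>_. 0 :: 'k::field) \<in> boundaries \<Delta> k"
  using bd_in_boundaries[OF zero_in_chains] by (simp add: bd_zero)

lemma boundaries_add:
  "x \<in> boundaries \<Delta> k \<Longrightarrow> y \<in> boundaries \<Delta> k \<Longrightarrow> (\<lambda>F. x F + y F) \<in> boundaries \<Delta> k"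
  unfolding boundaries_def by (auto simp flip: bd_add intro: chains_add)

lemma boundaries_diff:
  "x \<in> boundaries \<Delta> k \<Longrightarrow> y \<in> boundaries \<Delta> k \<Longrightarrow> (\<lambda>F. x F - y F) \<in> boundaries \<Delta> k"
  unfolding boundaries_def by (auto simp flip: bd_diff intro: chains_diff)

lemma cycles_lincomb:
  "x \<in> cycles \<Delta> k \<Longrightarrow> y \<in> cycles \<Delta> k \<Longrightarrow> (\<lambda>F. a * x F + b * y F) \<in> cycles \<Delta> k"
  unfolding cycles_def by (simp add: chains_lincomb bd_lincomb)

lemma chains_subcomplex: "\<Delta> \<subseteq> \<Delta>' \<Longrightarrow> chains \<Delta> k \<subseteq> chains \<Delta>' k"
  unfolding chains_def by auto

lemma bd_subcomplex:
  assumes "simplicial_complex m \<Delta>" "simplicial_complex m \<Delta>'" "\<Delta> \<subseteq> \<Delta>'" "c \<in> chains \<Delta> k"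
  shows "bd \<Delta>' c = bd \<Delta> (c :: nat set \<Rightarrow> 'k::field)"
proof
  fix G
  have supp: "c F = 0" if "F \<notin> \<Delta>" for F using assms(4) that unfolding chains_def by auto
  show "bd \<Delta>' c G = bd \<Delta> c G"
  proof (cases "G \<in> \<Delta>")
    case True
    define h where "h v = (if insert v G \<in> \<Delta> then incidence_sign G v * c (insert v G) else (0::'k))" for v
    have "bd \<Delta>' c G = (\<Sum>v\<in>\<Union>\<Delta>' - G. h v)"
      unfolding bd_altdef h_def using True assms(3) supp by (auto intro!: sum.cong)
    also have "\<dots> = (\<Sum>v\<in>\<Union>\<Delta> - G. h v)"
      using simplicial_complex_finite_vertices[OF assms(2)] assms(3) unfolding h_def
      by (intro sum.mono_neutral_right) auto
    finally show ?thesis using True unfolding bd_altdef h_def by simp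
  next
    case False
    then have "c (insert v G) = 0" for v
      using supp simplicial_complex_subset_face[OF assms(1)] by (meson subset_insertI)
    then show ?thesis using False unfolding bd_altdef by (auto intro!: sum.neutral)
  qed
qed

lemma cycles_subcomplex:
  assumes "simplicial_complex m \<Delta>" "simplicial_complex m \<Delta>'" "\<Delta> \<subseteq> \<Delta>'"
  shows "cycles \<Delta> k \<subseteq> (cycles \<Delta>' k :: (nat set \<Rightarrow> 'k::field) set)"
proof
  fix z :: "nat set \<Rightarrow> 'k" assume "z \<in> cycles \<Delta> k"
  then show "z \<in> cycles \<Delta>' k"
    using chains_subcomplex[OF assms(3)] bd_subcomplex[OF assms, of z k] unfolding cycles_def by auto
qed

lemma boundaries_subcomplex:
  assumes "simplicial_complex m \<Delta>" "simplicial_complex m \<Delta>'" "\<Delta> \<subseteq> \<Delta>'"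
  shows "boundaries \<Delta> k \<subseteq> (boundaries \<Delta>' k :: (nat set \<Rightarrow> 'k::field) set)"
proof
  fix z :: "nat set \<Rightarrow> 'k" assume "z \<in> boundaries \<Delta> k"
  then obtain c where c: "c \<in> chains \<Delta> (Suc k)" "z = bd \<Delta> c" unfolding boundaries_def by auto
  then have "z = bd \<Delta>' c" using bd_subcomplex[OF assms c(1)] by simp
  then show "z \<in> boundaries \<Delta>' k"
    using bd_in_boundaries chains_subcomplex[OF assms(3)] c(1) by blast
qed

definition induces_homology_iso ::
  "((nat set \<Rightarrow> 'k::field) \<Rightarrow> nat set \<Rightarrow> 'k) \<Rightarrow> nat set set \<Rightarrow> nat set set \<Rightarrow> nat \<Rightarrow> bool" where
  "induces_homology_iso f X Y k \<longleftrightarrow>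
     (\<forall>z\<in>cycles X k. f z \<in> cycles Y k) \<and>
     (\<forall>a b x y. x \<in> cycles X k \<longrightarrow> y \<in> cycles X k \<longrightarrow>
        f (\<lambda>F. a * x F + b * y F) = (\<lambda>F. a * f x F + b * f y F)) \<and>
     (\<forall>z'\<in>cycles Y k. \<exists>z\<in>cycles X k. (\<lambda>F. z' F - f z F) \<in> boundaries Y k) \<and>
     (\<forall>z\<in>cycles X k. f z \<in> boundaries Y k \<longleftrightarrow> z \<in> boundaries X k)"

lemma reduced_homology_iso_iff:
  "reduced_homology_iso TYPE('k::field) X Y k \<longleftrightarrow>
     (\<exists>f :: (nat set \<Rightarrow> 'k) \<Rightarrow> nat set \<Rightarrow> 'k. induces_homology_iso f X Y k)"
  unfolding reduced_homology_iso_def induces_homology_iso_def ..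

lemma induces_homology_iso_id: "induces_homology_iso (\<lambda>z. z :: nat set \<Rightarrow> 'k::field) X X k"
  unfolding induces_homology_iso_def using zero_in_boundaries[where 'k='k] by force

lemma induces_homology_iso_comp:
  assumes f: "induces_homology_iso f X Y k" and g: "induces_homology_iso g Y Z k"
  shows "induces_homology_iso (\<lambda>z. g (f z)) X Z k"
proof -
  obtain f_cycles: "\<forall>z\<in>cycles X k. f z \<in> cycles Y k"
    and f_linear: "\<forall>a b x y. x \<in> cycles X k \<longrightarrow> y \<in> cycles X k \<longrightarrow>
        f (\<lambda>F. a * x F + b * y F) = (\<lambda>F. a * f x F + b * f y F)"
    and f_onto: "\<forall>z'\<in>cycles Y k. \<exists>z\<in>cycles X k. (\<lambda>F. z' F - f z F) \<in> boundaries Y k"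
    and f_boundaries: "\<forall>z\<in>cycles X k. f z \<in> boundaries Y k \<longleftrightarrow> z \<in> boundaries X k"
    using f unfolding induces_homology_iso_def by blast
  obtain g_cycles: "\<forall>z\<in>cycles Y k. g z \<in> cycles Z k"
    and g_linear: "\<forall>a b x y. x \<in> cycles Y k \<longrightarrow> y \<in> cycles Y k \<longrightarrow>
        g (\<lambda>F. a * x F + b * y F) = (\<lambda>F. a * g x F + b * g y F)"
    and g_onto: "\<forall>z'\<in>cycles Z k. \<exists>z\<in>cycles Y k. (\<lambda>F. z' F - g z F) \<in> boundaries Z k"
    and g_boundaries: "\<forall>z\<in>cycles Y k. g z \<in> boundaries Z k \<longleftrightarrow> z \<in> boundaries Y k"
    using g unfolding induces_homology_iso_def by blast
  have onto: "\<exists>z\<in>cycles X k. (\<lambda>F. z3 F - g (f z) F) \<in> boundaries Z k" if z3: "z3 \<in> cycles Z k" for z3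
  proof -
    obtain z2 where z2: "z2 \<in> cycles Y k" "(\<lambda>F. z3 F - g z2 F) \<in> boundaries Z k"
      using g_onto z3 by blast
    obtain z1 where z1: "z1 \<in> cycles X k" "(\<lambda>F. z2 F - f z1 F) \<in> boundaries Y k"
      using f_onto z2(1) by blast
    have diff_eq: "(\<lambda>F. z2 F - f z1 F) = (\<lambda>F. 1 * z2 F + (-1) * f z1 F)" by simp
    have "(\<lambda>F. z2 F - f z1 F) \<in> cycles Y k"
      unfolding diff_eq using cycles_lincomb z2(1) f_cycles z1(1) by blast
    then have "g (\<lambda>F. z2 F - f z1 F) \<in> boundaries Z k" using g_boundaries z1(2) by blast
    moreover have "g (\<lambda>F. z2 F - f z1 F) = (\<lambda>F. 1 * g z2 F + (-1) * g (f z1) F)"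
      unfolding diff_eq using g_linear z2(1) f_cycles z1(1) by blast
    ultimately have "(\<lambda>F. g z2 F - g (f z1) F) \<in> boundaries Z k" by simp
    from boundaries_add[OF z2(2) this]
    have "(\<lambda>F. z3 F - g (f z1) F) \<in> boundaries Z k" by simp
    then show ?thesis using z1(1) by blast
  qed
  show ?thesis
    unfolding induces_homology_iso_def
    using f_cycles f_linear f_boundaries g_cycles g_linear g_boundaries onto by simp
qed

text \<open>Symmetry of reduced_homology_iso would need a linear section of the quotient
  map, so the equivalence carries both directions.\<close>
definition homology_equivalent :: "'k::field itself \<Rightarrow> nat set set \<Rightarrow> nat set set \<Rightarrow> bool" where
  "homology_equivalent K X Y \<longleftrightarrow>
     (\<forall>k. reduced_homology_iso K X Y k \<and> reduced_homology_iso K Y X k)"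

lemma homology_equivalent_refl: "homology_equivalent TYPE('k::field) X X"
  unfolding homology_equivalent_def reduced_homology_iso_iff using induces_homology_iso_id by blast

lemma homology_equivalent_sym:
  "homology_equivalent TYPE('k::field) X Y \<Longrightarrow> homology_equivalent TYPE('k) Y X"
  unfolding homology_equivalent_def by blast

lemma homology_equivalent_trans:
  "homology_equivalent TYPE('k::field) X Y \<Longrightarrow> homology_equivalent TYPE('k) Y Z \<Longrightarrow>
   homology_equivalent TYPE('k) X Z"
  unfolding homology_equivalent_def reduced_homology_iso_iff by (meson induces_homology_iso_comp)

definition deletion :: "nat \<Rightarrow> nat set set \<Rightarrow> nat set set" where
  "deletion v \<Delta> = {F \<in> \<Delta>. v \<notin> F}"

lemma simplicial_complex_deletion:
  "simplicial_complex m \<Delta> \<Longrightarrow> simplicial_complex m (deletion v \<Delta>)"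
  unfolding simplicial_complex_def deletion_def by blast

locale dominated_vertex =
  fixes m :: nat and \<Delta> :: "nat set set" and a a0 :: nat
  assumes complex: "simplicial_complex m \<Delta>"
    and dominated: "\<And>G. G \<in> \<Delta> \<Longrightarrow> a \<in> G \<Longrightarrow> insert a0 G \<in> \<Delta>"
    and distinct: "a \<noteq> a0"
begin

text \<open>As \<partial>(E x) agrees with x on
  the faces through a but not a0, the retraction x - \<partial>(E x) is supported on the deletion of a
  as soon as its boundary is.\<close>
definition apex_cone :: "(nat set \<Rightarrow> 'k::field) \<Rightarrow> nat set \<Rightarrow> 'k" where
  "apex_cone x G =
     (if a \<in> G \<and> a0 \<in> G \<and> G \<in> \<Delta> then incidence_sign (G - {a0}) a0 * x (G - {a0}) else 0)"

definition retraction :: "(nat set \<Rightarrow> 'k::field) \<Rightarrow> nat set \<Rightarrow> 'k" where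
  "retraction x F = x F - bd \<Delta> (apex_cone x) F"

lemma complex_deletion: "simplicial_complex m (deletion a \<Delta>)"
  using simplicial_complex_deletion[OF complex] .

lemma deletion_subset: "deletion a \<Delta> \<subseteq> \<Delta>"
  unfolding deletion_def by blast

lemma apex_cone_in_chains:
  assumes "x \<in> chains \<Delta> k"
  shows "apex_cone x \<in> chains \<Delta> (Suc k)"
  unfolding chains_def
proof (intro CollectI allI impI)
  fix G assume "apex_cone x G \<noteq> 0"
  then have G: "G \<in> \<Delta>" "a0 \<in> G" "x (G - {a0}) \<noteq> 0"
    unfolding apex_cone_def by (auto split: if_splits)
  then have "card (G - {a0}) = Suc k" using assms unfolding chains_def by blast
  then have "card G = Suc (Suc k)"
    using G(2) simplicial_complex_finite_face[OF complex G(1)] by (metis card.remove)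
  then show "G \<in> \<Delta> \<and> card G = Suc (Suc k)" using G(1) by blast
qed

lemma apex_cone_lincomb:
  "apex_cone (\<lambda>F. p * x F + q * y F) = (\<lambda>G. p * apex_cone x G + q * apex_cone y G)"
  unfolding apex_cone_def by (auto simp: algebra_simps)

lemma apex_cone_deletion:
  assumes "x \<in> chains (deletion a \<Delta>) k"
  shows "apex_cone x = (\<lambda>_. 0)"
proof
  fix G
  have "x (G - {a0}) = 0" if "a \<in> G"
    using assms that distinct unfolding chains_def deletion_def by auto
  then show "apex_cone x G = 0" unfolding apex_cone_def by simp
qed

lemma bd_apex_cone:
  assumes "G \<in> \<Delta>" "a \<in> G" "a0 \<notin> G"
  shows "bd \<Delta> (apex_cone x) G = x G"
proof -
  have "insert a0 G \<in> \<Delta>" using dominated assms(1,2) .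
  then have "bd \<Delta> (apex_cone x) G = incidence_sign G a0 * apex_cone x (insert a0 G)"
    using assms(3) by (intro bd_single_coface[OF complex]) (auto simp: apex_cone_def)
  also have "\<dots> = incidence_sign G a0 * incidence_sign G a0 * x G"
    using \<open>insert a0 G \<in> \<Delta>\<close> assms(2,3) by (simp add: apex_cone_def)
  finally show ?thesis by (simp add: incidence_sign_square)
qed

lemma retraction_off_star:
  assumes "x \<in> chains \<Delta> k" "a \<in> G" "a0 \<notin> G"
  shows "retraction x G = 0"
proof (cases "G \<in> \<Delta>")
  case True
  then show ?thesis using bd_apex_cone[OF True assms(2,3), of x] by (simp add: retraction_def)
next
  case False
  then show ?thesis using assms(1) unfolding retraction_def chains_def bd_def by auto
qed

text \<open>If y G \<noteq> 0 with a, a0 \<in> G, then G is the only coface of G - {a0} in the support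
  of y, so \<partial>y (G - {a0}) \<noteq> 0.\<close>
lemma chains_deletionI:
  fixes y :: "nat set \<Rightarrow> 'k::field"
  assumes y: "y \<in> chains \<Delta> k"
    and off_star: "\<And>G. a \<in> G \<Longrightarrow> a0 \<notin> G \<Longrightarrow> y G = 0"
    and bd_star: "\<And>H. a \<in> H \<Longrightarrow> bd \<Delta> y H = 0"
  shows "y \<in> chains (deletion a \<Delta>) k"
  unfolding chains_def
proof (intro CollectI allI impI)
  fix G assume nz: "y G \<noteq> 0"
  then have G: "G \<in> \<Delta>" "card G = Suc k" using y unfolding chains_def by auto
  have "a \<notin> G"
  proof
    assume "a \<in> G"
    with nz off_star have "a0 \<in> G" by blast
    define H where "H = G - {a0}"
    have H: "a \<in> H" "a0 \<notin> H" "insert a0 H = G"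
      using \<open>a \<in> G\<close> \<open>a0 \<in> G\<close> distinct unfolding H_def by auto
    have "bd \<Delta> y H = incidence_sign H a0 * y G"
      using bd_single_coface[OF complex _ H(2), of y] H off_star G(1) by auto
    then show False using bd_star[OF H(1)] nz incidence_sign_nonzero[of H a0, where 'k='k] by simp
  qed
  then show "G \<in> deletion a \<Delta> \<and> card G = Suc k" using G unfolding deletion_def by blast
qed

lemma retraction_in_cycles:
  assumes z: "z \<in> cycles \<Delta> k"
  shows "retraction z \<in> cycles (deletion a \<Delta>) k"
proof -
  have z_chain: "z \<in> chains \<Delta> k" using z unfolding cycles_def by blast
  have bd_retraction: "bd \<Delta> (retraction z) = (\<lambda>_. 0)"
    using z unfolding retraction_def[abs_def] bd_diff bd_bd[OF complex] cycles_def by simp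
  have "retraction z \<in> chains (deletion a \<Delta>) k"
  proof (rule chains_deletionI)
    show "retraction z \<in> chains \<Delta> k" unfolding retraction_def[abs_def]
      by (intro chains_diff z_chain bd_in_chains[OF complex] apex_cone_in_chains)
  qed (use retraction_off_star[OF z_chain] bd_retraction in auto)
  moreover have "bd (deletion a \<Delta>) (retraction z) = (\<lambda>_. 0)"
    using bd_retraction bd_subcomplex[OF complex_deletion complex deletion_subset calculation] by simp
  ultimately show ?thesis unfolding cycles_def by blast
qed

lemma boundaries_deletion_reflect:
  assumes z: "z \<in> cycles (deletion a \<Delta>) k" and "z \<in> boundaries \<Delta> k"
  shows "z \<in> boundaries (deletion a \<Delta>) k"
proof -
  obtain c where c: "c \<in> chains \<Delta> (Suc k)" "z = bd \<Delta> c"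
    using assms(2) unfolding boundaries_def by blast
  have bd_retraction: "bd \<Delta> (retraction c) = z"
    unfolding retraction_def[abs_def] bd_diff bd_bd[OF complex] c(2) by simp
  have "retraction c \<in> chains (deletion a \<Delta>) (Suc k)"
  proof (rule chains_deletionI)
    show "retraction c \<in> chains \<Delta> (Suc k)" unfolding retraction_def[abs_def]
      by (intro chains_diff c(1) bd_in_chains[OF complex] apex_cone_in_chains)
    show "bd \<Delta> (retraction c) H = 0" if "a \<in> H" for H
      using z that unfolding bd_retraction cycles_def chains_def deletion_def by auto
  qed (use retraction_off_star[OF c(1)] in auto)
  moreover have "z = bd (deletion a \<Delta>) (retraction c)"
    using bd_retraction bd_subcomplex[OF complex_deletion complex deletion_subset calculation] by simp
  ultimately show ?thesis by (simp add: bd_in_boundaries)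
qed

lemma inclusion_induces_homology_iso:
  "induces_homology_iso (\<lambda>z. z :: nat set \<Rightarrow> 'k::field) (deletion a \<Delta>) \<Delta> k"
  unfolding induces_homology_iso_def
proof (intro conjI ballI allI impI)
  fix z :: "nat set \<Rightarrow> 'k" assume "z \<in> cycles (deletion a \<Delta>) k"
  then show "z \<in> cycles \<Delta> k"
    using cycles_subcomplex[OF complex_deletion complex deletion_subset] by blast
next
  fix z :: "nat set \<Rightarrow> 'k" assume z: "z \<in> cycles \<Delta> k"
  have "(\<lambda>F. z F - retraction z F) = bd \<Delta> (apex_cone z)"
    unfolding retraction_def by simp
  also have "\<dots> \<in> boundaries \<Delta> k"
    using z by (simp add: bd_in_boundaries apex_cone_in_chains cycles_def)
  finally show "\<exists>z'\<in>cycles (deletion a \<Delta>) k. (\<lambda>F. z F - z' F) \<in> boundaries \<Delta> k"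
    using retraction_in_cycles[OF z] by blast
next
  fix z :: "nat set \<Rightarrow> 'k" assume "z \<in> cycles (deletion a \<Delta>) k"
  then show "z \<in> boundaries \<Delta> k \<longleftrightarrow> z \<in> boundaries (deletion a \<Delta>) k"
    using boundaries_deletion_reflect boundaries_subcomplex[OF complex_deletion complex deletion_subset]
    by blast
qed simp

lemma retraction_induces_homology_iso:
  "induces_homology_iso (retraction :: (nat set \<Rightarrow> 'k::field) \<Rightarrow> _) \<Delta> (deletion a \<Delta>) k"
  unfolding induces_homology_iso_def
proof (intro conjI ballI allI impI)
  fix p q :: 'k and x y :: "nat set \<Rightarrow> 'k"
  show "retraction (\<lambda>F. p * x F + q * y F) = (\<lambda>F. p * retraction x F + q * retraction y F)"
    unfolding retraction_def[abs_def] by (simp add: apex_cone_lincomb bd_lincomb algebra_simps)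
next
  fix z :: "nat set \<Rightarrow> 'k" assume z: "z \<in> cycles (deletion a \<Delta>) k"
  then have "retraction z = z"
    using apex_cone_deletion[of z k] unfolding retraction_def[abs_def] cycles_def by (simp add: bd_zero)
  then have "(\<lambda>F. z F - retraction z F) \<in> boundaries (deletion a \<Delta>) k"
    using zero_in_boundaries[where 'k='k] by simp
  moreover have "z \<in> cycles \<Delta> k"
    using z cycles_subcomplex[OF complex_deletion complex deletion_subset] by blast
  ultimately show "\<exists>z'\<in>cycles \<Delta> k. (\<lambda>F. z F - retraction z' F) \<in> boundaries (deletion a \<Delta>) k"
    by blast
next
  fix z :: "nat set \<Rightarrow> 'k" assume z: "z \<in> cycles \<Delta> k"
  have cone_boundary: "bd \<Delta> (apex_cone z) \<in> boundaries \<Delta> k"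
    using z by (simp add: bd_in_boundaries apex_cone_in_chains cycles_def)
  show "retraction z \<in> boundaries (deletion a \<Delta>) k \<longleftrightarrow> z \<in> boundaries \<Delta> k"
  proof
    assume "retraction z \<in> boundaries (deletion a \<Delta>) k"
    then have "retraction z \<in> boundaries \<Delta> k"
      using boundaries_subcomplex[OF complex_deletion complex deletion_subset] by blast
    from boundaries_add[OF this cone_boundary] show "z \<in> boundaries \<Delta> k"
      unfolding retraction_def by simp
  next
    assume "z \<in> boundaries \<Delta> k"
    from boundaries_diff[OF this cone_boundary]
    have "retraction z \<in> boundaries \<Delta> k" unfolding retraction_def[abs_def] .
    then show "retraction z \<in> boundaries (deletion a \<Delta>) k"
      using boundaries_deletion_reflect retraction_in_cycles[OF z] by blast
  qed
qed (rule retraction_in_cycles)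

theorem homology_equivalent_deletion: "homology_equivalent TYPE('k::field) (deletion a \<Delta>) \<Delta>"
  unfolding homology_equivalent_def reduced_homology_iso_iff
  using inclusion_induces_homology_iso retraction_induces_homology_iso by blast

end

lemma simplicial_complex_cone:
  assumes "simplicial_complex m \<Delta>" "A \<subseteq> {1..m}"
  shows "simplicial_complex m (cone A \<Delta>)"
proof -
  have "cone A \<Delta> \<subseteq> Pow {1..m}"
    using assms(2) simplicial_complex_vertices_subset[OF assms(1)] unfolding cone_def by blast
  moreover have "\<forall>F\<in>cone A \<Delta>. \<forall>G. G \<subseteq> F \<longrightarrow> G \<in> cone A \<Delta>" unfolding cone_def by blast
  ultimately show ?thesis unfolding simplicial_complex_def by blast
qed

lemma cone_insert_iff: "a \<notin> G \<Longrightarrow> G \<in> cone (insert a X) \<Delta> \<longleftrightarrow> G \<in> cone X \<Delta>"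
  unfolding cone_def by blast

lemma insert_apex_in_cone: "x \<in> X \<Longrightarrow> G \<in> cone X \<Delta> \<Longrightarrow> insert x G \<in> cone X \<Delta>"
  unfolding cone_def by blast

lemma Union_cone_subset: "\<Union>(cone X \<Delta>) \<subseteq> X \<union> \<Union>\<Delta>"
  unfolding cone_def by blast

lemma simplicial_complex_Delta_AB:
  assumes "simplicial_complex m D1" "simplicial_complex m D2" "simplicial_complex m D3"
    and "A \<union> B \<subseteq> {1..m}"
  shows "simplicial_complex m (Delta_AB D1 D2 D3 A B)"
  unfolding Delta_AB_def using assms by (simp add: simplicial_complex_cone simplicial_complex_Un)

lemma Union_Delta_AB_subset:
  "\<Union>(Delta_AB D1 D2 D3 A B) \<subseteq> A \<union> B \<union> vertex_set (D1 \<union> D2 \<union> D3)"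
  using Union_cone_subset[of A D1] Union_cone_subset[of B D2] Union_cone_subset[of "A \<union> B" D3]
  unfolding Delta_AB_def vertex_set_def by auto

lemma Delta_AB_swap: "Delta_AB D1 D2 D3 A B = Delta_AB D2 D1 D3 B A"
  unfolding Delta_AB_def by (simp add: Un_ac)

lemma deletion_Delta_AB_insert:
  assumes "a \<notin> A \<union> B \<union> vertex_set (D1 \<union> D2 \<union> D3)"
  shows "deletion a (Delta_AB D1 D2 D3 (insert a A) B) = Delta_AB D1 D2 D3 A B"
proof -
  have "a \<notin> G" if "G \<in> Delta_AB D1 D2 D3 A B" for G
    using that assms Union_Delta_AB_subset by blast
  then show ?thesis
    unfolding deletion_def Delta_AB_def by (auto simp: cone_insert_iff)
qed

lemma dominated_vertex_Delta_AB:
  assumes "simplicial_complex m D1" "simplicial_complex m D2" "simplicial_complex m D3"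
    and "insert a A \<union> B \<subseteq> {1..m}" "a0 \<in> A" "a \<notin> A \<union> B \<union> vertex_set (D1 \<union> D2 \<union> D3)"
  shows "dominated_vertex m (Delta_AB D1 D2 D3 (insert a A) B) a a0"
proof
  show "simplicial_complex m (Delta_AB D1 D2 D3 (insert a A) B)"
    using assms(1-4) by (rule simplicial_complex_Delta_AB)
  show "a \<noteq> a0" using assms(5,6) by blast
  fix G assume G: "G \<in> Delta_AB D1 D2 D3 (insert a A) B" "a \<in> G"
  have "G \<notin> cone B D2"
    using G(2) assms(6) Union_cone_subset[of B D2] unfolding vertex_set_def by blast
  then show "insert a0 G \<in> Delta_AB D1 D2 D3 (insert a A) B"
    using G(1) assms(5) insert_apex_in_cone unfolding Delta_AB_def by (metis UnCI UnE insertCI)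
qed

lemma homology_equivalent_Delta_AB_insert:
  assumes "simplicial_complex m D1" "simplicial_complex m D2" "simplicial_complex m D3"
    and "insert a A \<union> B \<subseteq> {1..m}" "A \<noteq> {}" "a \<notin> A \<union> B \<union> vertex_set (D1 \<union> D2 \<union> D3)"
  shows "homology_equivalent TYPE('k::field)
           (Delta_AB D1 D2 D3 A B) (Delta_AB D1 D2 D3 (insert a A) B)"
proof -
  obtain a0 where "a0 \<in> A" using assms(5) by blast
  with assms interpret dominated_vertex m "Delta_AB D1 D2 D3 (insert a A) B" a a0
    by (intro dominated_vertex_Delta_AB)
  show ?thesis
    using homology_equivalent_deletion deletion_Delta_AB_insert[OF assms(6)] by simp
qed

lemma homology_equivalent_Delta_AB_Un:
  assumes "simplicial_complex m D1" "simplicial_complex m D2" "simplicial_complex m D3"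
    and "A \<union> X \<union> B \<subseteq> {1..m}" "A \<noteq> {}" "X \<inter> (B \<union> vertex_set (D1 \<union> D2 \<union> D3)) = {}"
  shows "homology_equivalent TYPE('k::field)
           (Delta_AB D1 D2 D3 A B) (Delta_AB D1 D2 D3 (A \<union> X) B)"
proof -
  have "finite X" using assms(4) by (meson finite_atLeastAtMost finite_subset le_sup_iff)
  then show ?thesis using assms(4,6)
  proof (induction X rule: finite_induct)
    case empty
    show ?case using homology_equivalent_refl by simp
  next
    case (insert x X)
    then have IH: "homology_equivalent TYPE('k)
                     (Delta_AB D1 D2 D3 A B) (Delta_AB D1 D2 D3 (A \<union> X) B)"
      by auto
    show ?case
    proof (cases "x \<in> A")
      case True
      then show ?thesis using IH by (simp add: insert_absorb)
    next
      case False
      have "homology_equivalent TYPE('k)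
              (Delta_AB D1 D2 D3 (A \<union> X) B) (Delta_AB D1 D2 D3 (insert x (A \<union> X)) B)"
        using insert False assms(1-3,5) by (intro homology_equivalent_Delta_AB_insert) auto
      then show ?thesis using IH homology_equivalent_trans by simp
    qed
  qed
qed

lemma homology_equivalent_Delta_AB_singletons:
  assumes "simplicial_complex m D1" "simplicial_complex m D2" "simplicial_complex m D3"
    and "A \<union> B \<subseteq> {1..m}" "A \<noteq> {}" "B \<noteq> {}" "A \<inter> B = {}"
    and "(A \<union> B) \<inter> vertex_set (D1 \<union> D2 \<union> D3) = {}"
    and "{c, d} \<subseteq> {1..m}" "c \<noteq> d" "c \<notin> B" "{c, d} \<inter> vertex_set (D1 \<union> D2 \<union> D3) = {}"
  shows "homology_equivalent TYPE('k::field) (Delta_AB D1 D2 D3 A B) (Delta_AB D1 D2 D3 {c} {d})"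
proof -
  have V: "vertex_set (D2 \<union> D1 \<union> D3) = vertex_set (D1 \<union> D2 \<union> D3)"
    by (simp add: Un_ac)
  have "homology_equivalent TYPE('k) (Delta_AB D1 D2 D3 A B) (Delta_AB D1 D2 D3 (A \<union> {c}) B)"
    using assms by (intro homology_equivalent_Delta_AB_Un) auto
  moreover have "homology_equivalent TYPE('k)
                   (Delta_AB D1 D2 D3 {c} B) (Delta_AB D1 D2 D3 ({c} \<union> A) B)"
    using assms by (intro homology_equivalent_Delta_AB_Un) auto
  moreover have "homology_equivalent TYPE('k)
                   (Delta_AB D2 D1 D3 B {c}) (Delta_AB D2 D1 D3 (B \<union> {d}) {c})"
    using assms by (intro homology_equivalent_Delta_AB_Un) (auto simp: V)
  moreover have "homology_equivalent TYPE('k)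
                   (Delta_AB D2 D1 D3 {d} {c}) (Delta_AB D2 D1 D3 ({d} \<union> B) {c})"
    using assms by (intro homology_equivalent_Delta_AB_Un) (auto simp: V)
  ultimately show ?thesis
    by (metis Delta_AB_swap Un_commute homology_equivalent_sym homology_equivalent_trans)
qed

theorem proposition3p4:
  fixes n :: nat and D1 D2 D3 :: "nat set set" and A B A' B' :: "nat set" and i :: nat
  assumes "simplicial_complex n D1" "simplicial_complex n D2" "simplicial_complex n D3"
    and "A \<noteq> {}" "B \<noteq> {}" "A' \<noteq> {}" "B' \<noteq> {}"
    and "A \<subseteq> {1..n}" "B \<subseteq> {1..n}" "A' \<subseteq> {1..n}" "B' \<subseteq> {1..n}"
    and "A \<inter> B = {}" "A' \<inter> B' = {}"
    and "(A \<union> B) \<inter> vertex_set (D1 \<union> D2 \<union> D3) = {}"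
    and "(A' \<union> B') \<inter> vertex_set (D1 \<union> D2 \<union> D3) = {}"
    and "i > 0"
  shows "reduced_homology_iso TYPE('k::field) (Delta_AB D1 D2 D3 A B) (Delta_AB D1 D2 D3 A' B') i"
proof -
  define m where "m = Suc (Suc n)"
  have "n \<le> m" "Suc n \<in> {1..m}" "m \<in> {1..m}" "Suc n \<noteq> m" unfolding m_def by simp_all
  then have complexes: "simplicial_complex m D1" "simplicial_complex m D2" "simplicial_complex m D3"
    and sets: "A \<union> B \<subseteq> {1..m}" "A' \<union> B' \<subseteq> {1..m}" "{Suc n, m} \<subseteq> {1..m}"
    using assms(1-3,8-11) simplicial_complex_mono by auto
  have "vertex_set (D1 \<union> D2 \<union> D3) \<subseteq> {1..n}"
    using assms(1-3) simplicial_complex_vertices_subset unfolding vertex_set_def by simp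
  then have fresh: "{Suc n, m} \<inter> vertex_set (D1 \<union> D2 \<union> D3) = {}" unfolding m_def by auto
  have "Suc n \<notin> B" "Suc n \<notin> B'" using assms(9,11) by auto
  then have "homology_equivalent TYPE('k) (Delta_AB D1 D2 D3 A B) (Delta_AB D1 D2 D3 {Suc n} {m})"
    and "homology_equivalent TYPE('k) (Delta_AB D1 D2 D3 A' B') (Delta_AB D1 D2 D3 {Suc n} {m})"
    using assms(4-7,12-15) complexes sets fresh \<open>Suc n \<noteq> m\<close>
    by (simp_all add: homology_equivalent_Delta_AB_singletons)
  then have "homology_equivalent TYPE('k) (Delta_AB D1 D2 D3 A B) (Delta_AB D1 D2 D3 A' B')"
    using homology_equivalent_sym homology_equivalent_trans by blast
  \<comment> \<open>The equivalence holds in every degree.\<close>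
  then show ?thesis unfolding homology_equivalent_def by blast
qed

end
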